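(* Let $\mathcal{A}=\{A_1,\dots,A_m\}$ be a bimodal collection of pairwise disjoint nonempty subsets of a finite abelian group $G$, with internal difference groups $H_1,\dots,H_m$, and suppose there are at least two indices $i$ with $|A_i|<|H_i|$. Then for any two distinct indices $i\neq j$ with $|A_i|<|H_i|$ and $|A_j|<|H_j|$, $H_i$ is not a subgroup of $H_j$ and $H_j$ is not a subgroup of $H_i$.
   Context: $G$ is written additively. The internal difference group $H_i$ of $A_i$ is the subgroup generated by all $x-y$ with $x,y\in A_i$; one always has $|A_i|\le|H_i|$. A collection $\{A_1,\dots,A_m\}$ of pairwise disjoint subsets of $G$ is bimodal if for every $i$ and every $\delta\in G\setminus\{0\}$, the number $N_i(\delta)$ of pairs $(a,b)$ with $a\in A_i$, $b\in A_j$ for some $j\neq i$, and $a-b=\delta$, satisfies $N_i(\delta)\in\{0,|A_i|\}$. *)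

theory Defs
  imports Main
begin

text \<open>Subgroups of an additively written abelian group (type class idiom; the ambient
  group G is the whole type).\<close>
definition add_subgroup :: "'a::ab_group_add set \<Rightarrow> bool" where
  "add_subgroup S \<longleftrightarrow> 0 \<in> S \<and> (\<forall>x\<in>S. \<forall>y\<in>S. x - y \<in> S)"

definition subgroup_generated :: "'a::ab_group_add set \<Rightarrow> 'a set" where
  "subgroup_generated D = \<Inter>{S. add_subgroup S \<and> D \<subseteq> S}"

definition diff_group :: "'a::ab_group_add set \<Rightarrow> 'a set" where
  "diff_group A = subgroup_generated {x - y | x y. x \<in> A \<and> y \<in> A}"

definition N_count :: "nat \<Rightarrow> (nat \<Rightarrow> 'a::ab_group_add set) \<Rightarrow> nat \<Rightarrow> 'a \<Rightarrow> nat" where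
  "N_count m A i \<delta> = card {(a, b). a \<in> A i \<and> (\<exists>j<m. j \<noteq> i \<and> b \<in> A j) \<and> a - b = \<delta>}"

definition pairwise_disjoint_family :: "nat \<Rightarrow> (nat \<Rightarrow> 'a set) \<Rightarrow> bool" where
  "pairwise_disjoint_family m A \<longleftrightarrow> (\<forall>i<m. \<forall>j<m. i \<noteq> j \<longrightarrow> A i \<inter> A j = {})"

definition bimodal :: "nat \<Rightarrow> (nat \<Rightarrow> 'a::ab_group_add set) \<Rightarrow> bool" where
  "bimodal m A \<longleftrightarrow> pairwise_disjoint_family m A \<and>
     (\<forall>i<m. \<forall>\<delta>. \<delta> \<noteq> 0 \<longrightarrow> N_count m A i \<delta> \<in> {0, card (A i)})"

end

theory Submission
  imports Defs
begin

text \<open>Let \<open>B\<^sub>i\<close> be the union of the blocks other than \<open>A\<^sub>i\<close>. Bimodality says that a difference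
  \<open>a' - x\<close> with \<open>a' \<in> A\<^sub>i\<close>, \<open>x \<in> B\<^sub>i\<close> is realised from every \<open>a \<in> A\<^sub>i\<close>, so \<open>B\<^sub>i\<close> is invariant under
  translation by the differences of \<open>A\<^sub>i\<close>, hence is a union of cosets of \<open>H\<^sub>i\<close>.
  If \<open>H\<^sub>i \<subseteq> H\<^sub>j\<close>, take \<open>a \<in> A\<^sub>i\<close>; then \<open>a + H\<^sub>i \<subseteq> B\<^sub>j\<close>, and as \<open>|A\<^sub>i| < |H\<^sub>i|\<close> some \<open>a + h\<close> lies in a
  third block, hence in \<open>B\<^sub>i\<close>, and so does \<open>a = (a + h) - h\<close>: a contradiction with disjointness.\<close>

lemma add_subgroup_subgroup_generated: "add_subgroup (subgroup_generated D)"
  unfolding subgroup_generated_def add_subgroup_def by blast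

lemma subgroup_generated_minimal:
  "add_subgroup T \<Longrightarrow> D \<subseteq> T \<Longrightarrow> subgroup_generated D \<subseteq> T"
  unfolding subgroup_generated_def by blast

lemma add_subgroup_uminus: "add_subgroup S \<Longrightarrow> h \<in> S \<Longrightarrow> - h \<in> S"
  unfolding add_subgroup_def by (metis diff_0)

lemma add_subgroup_translation_stabilizer:
  fixes B :: "'a::ab_group_add set"
  shows "add_subgroup {h. \<forall>y. y \<in> B \<longleftrightarrow> y + h \<in> B}"
  unfolding add_subgroup_def
proof (intro conjI ballI)
  fix u v assume u: "u \<in> {h. \<forall>y. y \<in> B \<longleftrightarrow> y + h \<in> B}" and v: "v \<in> {h. \<forall>y. y \<in> B \<longleftrightarrow> y + h \<in> B}"
  have "y + (u - v) \<in> B \<longleftrightarrow> y \<in> B" for y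
  proof -
    have "y + (u - v) \<in> B \<longleftrightarrow> y + (u - v) + v \<in> B" using v by blast
    also have "y + (u - v) + v = y + u" by (simp add: algebra_simps)
    finally show ?thesis using u by blast
  qed
  then show "u - v \<in> {h. \<forall>y. y \<in> B \<longleftrightarrow> y + h \<in> B}" by blast
qed simp

lemma diff_group_translation_invariant:
  fixes A B :: "'a::ab_group_add set"
  assumes closed: "\<And>x a a'. x \<in> B \<Longrightarrow> a \<in> A \<Longrightarrow> a' \<in> A \<Longrightarrow> x + (a - a') \<in> B"
    and x: "x \<in> B" and h: "h \<in> diff_group A"
  shows "x + h \<in> B"
proof -
  have "{a - a' | a a'. a \<in> A \<and> a' \<in> A} \<subseteq> {h. \<forall>y. y \<in> B \<longleftrightarrow> y + h \<in> B}"
  proof safe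
    fix a a' y assume aa: "a \<in> A" "a' \<in> A"
    show "y + (a - a') \<in> B" if "y \<in> B" using closed[OF that aa] .
    show "y \<in> B" if "y + (a - a') \<in> B"
      using closed[OF that aa(2,1)] by (simp add: algebra_simps)
  qed
  then have "diff_group A \<subseteq> {h. \<forall>y. y \<in> B \<longleftrightarrow> y + h \<in> B}"
    unfolding diff_group_def
    by (intro subgroup_generated_minimal add_subgroup_translation_stabilizer)
  then show ?thesis using h x by blast
qed

definition other_blocks :: "nat \<Rightarrow> (nat \<Rightarrow> 'a set) \<Rightarrow> nat \<Rightarrow> 'a set" where
  "other_blocks m A i = {b. \<exists>j<m. j \<noteq> i \<and> b \<in> A j}"

lemma pairwise_disjoint_family_other_blocks:
  "pairwise_disjoint_family m A \<Longrightarrow> i < m \<Longrightarrow> a \<in> A i \<Longrightarrow> a \<notin> other_blocks m A i"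
  unfolding pairwise_disjoint_family_def other_blocks_def by blast

lemma other_blocks_memI: "k < m \<Longrightarrow> k \<noteq> i \<Longrightarrow> b \<in> A k \<Longrightarrow> b \<in> other_blocks m A i"
  unfolding other_blocks_def by blast

lemma N_count_ne_zero:
  fixes A :: "nat \<Rightarrow> 'a::{ab_group_add, finite} set"
  assumes "a' \<in> A i" and "x \<in> other_blocks m A i"
  shows "N_count m A i (a' - x) \<noteq> 0"
proof -
  define S where "S = {(a, b). a \<in> A i \<and> (\<exists>j<m. j \<noteq> i \<and> b \<in> A j) \<and> a - b = a' - x}"
  have "(a', x) \<in> S" using assms unfolding S_def other_blocks_def by blast
  then have "card S \<noteq> 0" by (auto simp: card_eq_0_iff)
  then show ?thesis unfolding N_count_def S_def .
qed

text \<open>The pairs counted by \<open>N\<^sub>i(\<delta>)\<close> are determined by their first component, so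
  \<open>N\<^sub>i(\<delta>) = |A\<^sub>i|\<close> forces every element of \<open>A\<^sub>i\<close> to occur as a first component.\<close>
lemma N_count_full_partner:
  fixes A :: "nat \<Rightarrow> 'a::{ab_group_add, finite} set"
  assumes full: "N_count m A i \<delta> = card (A i)" and a: "a \<in> A i"
  shows "\<exists>b \<in> other_blocks m A i. a - b = \<delta>"
proof -
  define S where "S = {(a, b). a \<in> A i \<and> (\<exists>j<m. j \<noteq> i \<and> b \<in> A j) \<and> a - b = \<delta>}"
  have "inj_on fst S"
    by (rule inj_onI) (auto simp: S_def)
  moreover have "card S = card (A i)" using full unfolding N_count_def S_def .
  ultimately have "card (fst ` S) = card (A i)" by (simp add: card_image)
  moreover have "fst ` S \<subseteq> A i" unfolding S_def by auto
  ultimately have "fst ` S = A i" by (simp add: card_subset_eq)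
  then obtain b where "(a, b) \<in> S" using a by force
  then show ?thesis unfolding S_def other_blocks_def by blast
qed

lemma bimodal_other_blocks_translate:
  fixes A :: "nat \<Rightarrow> 'a::{ab_group_add, finite} set"
  assumes bm: "bimodal m A" and i: "i < m"
    and x: "x \<in> other_blocks m A i" and a: "a \<in> A i" and a': "a' \<in> A i"
  shows "x + (a - a') \<in> other_blocks m A i"
proof -
  define \<delta> where "\<delta> = a' - x"
  have "a' \<notin> other_blocks m A i"
    using bm i a' unfolding bimodal_def by (blast dest: pairwise_disjoint_family_other_blocks)
  then have "\<delta> \<noteq> 0" using x unfolding \<delta>_def by auto
  then have "N_count m A i \<delta> \<in> {0, card (A i)}" using bm i unfolding bimodal_def by blast
  moreover have "N_count m A i \<delta> \<noteq> 0"
    unfolding \<delta>_def using a' x by (rule N_count_ne_zero)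
  ultimately have "N_count m A i \<delta> = card (A i)" by simp
  then obtain b where "b \<in> other_blocks m A i" "a - b = \<delta>"
    using N_count_full_partner a by blast
  moreover from \<open>a - b = \<delta>\<close> have "b = x + (a - a')" unfolding \<delta>_def by (simp add: algebra_simps)
  ultimately show ?thesis by simp
qed

lemma bimodal_other_blocks_diff_group_invariant:
  fixes A :: "nat \<Rightarrow> 'a::{ab_group_add, finite} set"
  assumes "bimodal m A" "i < m" "x \<in> other_blocks m A i" "h \<in> diff_group (A i)"
  shows "x + h \<in> other_blocks m A i"
  by (rule diff_group_translation_invariant[OF bimodal_other_blocks_translate[OF assms(1,2)] assms(3,4)])

lemma bimodal_diff_group_not_subset:
  fixes A :: "nat \<Rightarrow> 'a::{ab_group_add, finite} set"
  assumes bm: "bimodal m A" and ne: "A i \<noteq> {}"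
    and i: "i < m" and j: "j < m" and ij: "i \<noteq> j"
    and small: "card (A i) < card (diff_group (A i))"
  shows "\<not> diff_group (A i) \<subseteq> diff_group (A j)"
proof
  assume sub: "diff_group (A i) \<subseteq> diff_group (A j)"
  have disj: "pairwise_disjoint_family m A" using bm unfolding bimodal_def by blast
  obtain a where a: "a \<in> A i" using ne by blast
  have "card ((+) a ` diff_group (A i)) > card (A i)" using small by (simp add: card_image)
  then obtain h where h: "h \<in> diff_group (A i)" "a + h \<notin> A i"
    by (metis card_mono finite image_subsetI leD)
  have "a \<in> other_blocks m A j" using i ij a by (rule other_blocks_memI)
  then have "a + h \<in> other_blocks m A j"
    using bimodal_other_blocks_diff_group_invariant[OF bm j] h(1) sub by blast
  then obtain k where "k < m" "k \<noteq> j" "a + h \<in> A k" unfolding other_blocks_def by blast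
  with h(2) have "a + h \<in> other_blocks m A i" by (metis other_blocks_memI)
  moreover have "- h \<in> diff_group (A i)"
    using add_subgroup_uminus[OF add_subgroup_subgroup_generated] h(1)
    unfolding diff_group_def .
  ultimately have "a + h + - h \<in> other_blocks m A i"
    by (rule bimodal_other_blocks_diff_group_invariant[OF bm i])
  then show False using pairwise_disjoint_family_other_blocks[OF disj i a] by simp
qed

theorem lemma3p3:
  fixes A :: "nat \<Rightarrow> 'a::{ab_group_add, finite} set" and m :: nat
  assumes "bimodal m A"
    and "\<forall>i<m. A i \<noteq> {}"
    and "\<exists>i<m. \<exists>j<m. i \<noteq> j \<and> card (A i) < card (diff_group (A i))
                         \<and> card (A j) < card (diff_group (A j))"
    and "i < m" and "j < m" and "i \<noteq> j"
    and "card (A i) < card (diff_group (A i))"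
    and "card (A j) < card (diff_group (A j))"
  shows "\<not> diff_group (A i) \<subseteq> diff_group (A j) \<and> \<not> diff_group (A j) \<subseteq> diff_group (A i)"
  using bimodal_diff_group_not_subset[OF assms(1) _ assms(4,5,6,7)]
    bimodal_diff_group_not_subset[OF assms(1) _ assms(5,4) _ assms(8)] assms(2,4,5,6)
  by auto

end
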